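(* Let $D$ be a CAEXT derivation ending in a configuration $C\neq\mathsf{unsat}$. Then in $C$, for all array terms $a,b$ and index terms $i$: if $\pi(a,b[i])\neq()$, then the formula $\mathcal R(a,b[i])\Rightarrow a[i]\approx b[i]$ is valid in the theory of extensional constant arrays.
   Context: Theory. Many-sorted first-order logic with equality. There is an index sort $\sigma$, an element sort $\tau$, and an array sort $(\sigma\to\tau)$, with function symbols: read $a[i]$, write $a\langle i\triangleleft u\rangle$, and constant array $\langle v\rangle$. The theory of extensional constant arrays consists of all interpretations satisfying: (row-eq) $\forall a,i,j,u.\ i\approx j\Rightarrow a\langle i\triangleleft u\rangle[j]\approx u$; (row-ne) $\forall a,i,j,u.\ i\not\approx j\Rightarrow a\langle i\triangleleft u\rangle[j]\approx a[j]$; (ext) $\forall a,b.\ a\approx b\Leftrightarrow \forall i.\ a[i]\approx b[i]$; (roc) $\forall i,v.\ \langle v\rangle[i]\approx v$. The empty theory treats all these symbols (and the array sort) as uninterpreted. $T(A)$ is the set of terms occurring in $A$, $T_{\mathcal A}(A)$ the set of array terms in $A$, and $W(A)=\{a\langle i\triangleleft u\rangle[i]\approx u \mid a\langle i\triangleleft u\rangle\in T(A)\}$. Configurations. A configuration is either $\mathsf{unsat}$ or a triple $\langle A,\mathcal I,\pi\rangle$ where $A$ is a set of formulas (with flat literals), $\mathcal I$ is either $\mathcal I_0=\mathsf{none}$ or an interpretation in the empty theory satisfying $A$, and $\pi$ maps pairs $(a,t)$ ($a$ an array term, $t$ a read term $b[i]$ or a constant array term $\langle v\rangle$) to either the undefined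 value $()$ or a pair $(r,c)$ with $r$ a formula and $c$ an array term. $\pi_0$ maps every pair to $()$; the initial configuration for $A$ is $\langle A,\mathcal I_0,\pi_0\rangle$. Reasons. $\mathcal R(a,t)=()$ if $\pi(a,t)=()$; otherwise $\mathcal R(a,t)=\top$ if $t=a$ or $t=a[i]$ for some $i$; otherwise $\mathcal R(a,t)=\mathcal R(c,t)\wedge r$ where $\pi(a,t)=(r,c)$. Updated indices $I(a,\langle v\rangle)$: $()$ if $\pi(a,\langle v\rangle)=()$; $\emptyset$ if $a=\langle v\rangle$; $I(b,\langle v\rangle)\cup\{j\}$ if $\pi(a,\langle v\rangle)=(\top,b)$ with $b=a\langle j\triangleleft u\rangle$ or $a=b\langle j\triangleleft u\rangle$; otherwise $I(c,\langle v\rangle)$ where $\pi(a,\langle v\rangle)=(r,c)$. "$\mathcal I\models\varphi$" refers to the current $\mathcal I$ (empty theory); such premises require $\mathcal I\ne\mathcal I_0$. "Reset" means $(\mathcal I,\pi):=(\mathcal I_0,\pi_0)$. Rules of CAEXT: Interp: if $\mathcal I=\mathcal I_0$ and $\mathcal I'\models A\cup W(A)$ in the empty theory, set $\mathcal I:=\mathcal I'$. Conf: if $A\cup W(A)$ is empty-theory unsatisfiable, derive $\mathsf{unsat}$. InitR: $a[i]\in T(A)$ ⟹ $\pi(a,a[i]):=(\top,a)$. InitW: $s=a\langle i\triangleleft u\rangle\in T(A)$ ⟹ $\pi(s,s[i]):=(\top,s)$. RowD: $\mathcal I\models i\not\approx j$, $\pi(a\langle j\triangleleft u\rangle,b[i])\ne()$,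 $\pi(a,b[i])=()$ ⟹ $\pi(a,b[i]):=(i\not\approx j,a\langle j\triangleleft u\rangle)$. RowU: $\mathcal I\models i\not\approx j$, $a\langle j\triangleleft u\rangle\in T(A)$, $\pi(a,b[i])\ne()$, $\pi(a\langle j\triangleleft u\rangle,b[i])=()$ ⟹ $\pi(a\langle j\triangleleft u\rangle,b[i]):=(i\not\approx j,a)$. EqR: $\mathcal I\models a\approx c$, $a,c\in T_{\mathcal A}(A)$, $a\approx c\in T(A)$, $\pi(a,b[i])\ne()$, $\pi(c,b[i])=()$ ⟹ $\pi(c,b[i]):=(a\approx c,a)$. EqL: symmetric, $\pi(a,b[i]):=(a\approx c,c)$. CongR: $\mathcal I\models i\approx k$, $\pi(a,b[i])\ne()$, $\pi(a,c[k])\ne()$, $\mathcal I\models b[i]\not\approx c[k]$ ⟹ add $\mathcal R(a,b[i])\wedge\mathcal R(a,c[k])\wedge i\approx k\Rightarrow b[i]\approx c[k]$ to $A$, reset. DisEq: $\mathcal I\models a\not\approx c$, $a,c\in T_{\mathcal A}(A)$, $a\approx c\in T(A)$, $k_{\{a,c\}}\notin T(A)$ ⟹ add $a\not\approx c\Rightarrow a[k_{\{a,c\}}]\not\approx c[k_{\{a,c\}}]$ (fresh index constant $k_{\{a,c\}}$), reset. Roc: $\pi(\langle v\rangle,b[i])\ne()$, $\mathcal I\models b[i]\not\approx v$ ⟹ add $\mathcal R(\langle v\rangle,b[i])\Rightarrow b[i]\approx v$, reset. InitC: $\langle v\rangle\in T(A)$ ⟹ $\pi(\langle v\rangle,\langle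 v\rangle):=(\top,\langle v\rangle)$. CowD: $\pi(a\langle j\triangleleft u\rangle,\langle v\rangle)\ne()$, $\pi(a,\langle v\rangle)=()$, $\mathcal I\models\exists i{:}\sigma.\bigwedge_{k\in I(a\langle j\triangleleft u\rangle,\langle v\rangle)\cup\{j\}}i\not\approx k$ ⟹ $\pi(a,\langle v\rangle):=(\top,a\langle j\triangleleft u\rangle)$. CowU: $\pi(a,\langle v\rangle)\ne()$, $\pi(a\langle j\triangleleft u\rangle,\langle v\rangle)=()$, $a\langle j\triangleleft u\rangle\in T(A)$, $\mathcal I\models\exists i{:}\sigma.\bigwedge_{k\in I(a,\langle v\rangle)\cup\{j\}}i\not\approx k$ ⟹ $\pi(a\langle j\triangleleft u\rangle,\langle v\rangle):=(\top,a)$. CEqR: $\mathcal I\models a\approx c$, $a,c\in T_{\mathcal A}(A)$, $a\approx c\in T(A)$, $\pi(a,\langle v\rangle)\ne()$, $\pi(c,\langle v\rangle)=()$ ⟹ $\pi(c,\langle v\rangle):=(a\approx c,a)$. CEqL: symmetric, $\pi(a,\langle v\rangle):=(a\approx c,c)$. CongC: $\pi(a,\langle v\rangle)\ne()$, $\pi(a,\langle w\rangle)\ne()$, $\mathcal I\models v\not\approx w$, $\mathcal I\models\exists i{:}\sigma.\bigwedge_{k\in I(a,\langle v\rangle)\cup I(a,\langle w\rangle)}i\not\approx k$ ⟹ add $\mathcal R(a,\langle v\rangle)\wedge\mathcal R(a,\langle w\rangle)\wedge\exists i{:}\sigma.\bigwedge_{k\in I(a,\langle v\rangle)\cup I(a,\langle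 w\rangle)}i\not\approx k\Rightarrow v\approx w$, reset. Conflict rules: CongR, DisEq, Roc, CongC. A derivation is a sequence of configurations starting from an initial configuration, each obtained from the previous by a rule application. *)

theory Defs
  imports Main "HOL-Library.FSet"
begin

datatype srt = Idx | Elem | Arr

text \<open>Cst: uninterpreted constant symbol of a given sort; Var: (bound) variable of a
  given sort; Rd a i = a[i]; Wr a i u = a<i <| u>; CA v = constant array <v>;
  K X = the fresh index constant k_X attached to the unordered pair X = {a,c} (used by DisEq).\<close>
datatype trm = Cst string srt | Var string srt | Rd trm trm | Wr trm trm trm | CA trm
  | K "trm fset"

datatype fm = Tru | Fls | Eq trm trm | Neg fm | Conj fm fm | Disj fm fm | Imp fm fm
  | Exi string srt fm | All string srt fm

fun sort_of :: "trm \<Rightarrow> srt option" where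
  "sort_of (Cst n s) = Some s"
| "sort_of (Var x s) = Some s"
| "sort_of (Rd a i) = (if sort_of a = Some Arr \<and> sort_of i = Some Idx then Some Elem else None)"
| "sort_of (Wr a i u) = (if sort_of a = Some Arr \<and> sort_of i = Some Idx \<and> sort_of u = Some Elem
                         then Some Arr else None)"
| "sort_of (CA v) = (if sort_of v = Some Elem then Some Arr else None)"
| "sort_of (K X) = Some Idx"

fun wf_fm :: "fm \<Rightarrow> bool" where
  "wf_fm (Eq s t) = (sort_of s \<noteq> None \<and> sort_of s = sort_of t)"
| "wf_fm (Neg p) = wf_fm p"
| "wf_fm (Conj p q) = (wf_fm p \<and> wf_fm q)"
| "wf_fm (Disj p q) = (wf_fm p \<and> wf_fm q)"
| "wf_fm (Imp p q) = (wf_fm p \<and> wf_fm q)"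
| "wf_fm (Exi x s p) = wf_fm p"
| "wf_fm (All x s p) = wf_fm p"
| "wf_fm _ = True"

fun subterms :: "trm \<Rightarrow> trm set" where
  "subterms (Rd a i) = insert (Rd a i) (subterms a \<union> subterms i)"
| "subterms (Wr a i u) = insert (Wr a i u) (subterms a \<union> subterms i \<union> subterms u)"
| "subterms (CA v) = insert (CA v) (subterms v)"
| "subterms t = {t}"

fun ground :: "trm \<Rightarrow> bool" where
  "ground (Var x s) = False"
| "ground (Rd a i) = (ground a \<and> ground i)"
| "ground (Wr a i u) = (ground a \<and> ground i \<and> ground u)"
| "ground (CA v) = ground v"
| "ground _ = True"

fun atoms_fm :: "fm \<Rightarrow> (trm \<times> trm) set" where
  "atoms_fm (Eq s t) = {(s, t)}"
| "atoms_fm (Neg p) = atoms_fm p"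
| "atoms_fm (Conj p q) = atoms_fm p \<union> atoms_fm q"
| "atoms_fm (Disj p q) = atoms_fm p \<union> atoms_fm q"
| "atoms_fm (Imp p q) = atoms_fm p \<union> atoms_fm q"
| "atoms_fm (Exi x s p) = atoms_fm p"
| "atoms_fm (All x s p) = atoms_fm p"
| "atoms_fm _ = {}"

fun qfree :: "fm \<Rightarrow> bool" where
  "qfree (Exi x s p) = False"
| "qfree (All x s p) = False"
| "qfree (Neg p) = qfree p"
| "qfree (Conj p q) = (qfree p \<and> qfree q)"
| "qfree (Disj p q) = (qfree p \<and> qfree q)"
| "qfree (Imp p q) = (qfree p \<and> qfree q)"
| "qfree _ = True"

definition atoms :: "fm set \<Rightarrow> (trm \<times> trm) set" where
  "atoms A = (\<Union>p\<in>A. atoms_fm p)"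

definition T :: "fm set \<Rightarrow> trm set" where
  "T A = {t. ground t \<and> (\<exists>(s1, s2)\<in>atoms A. t \<in> subterms s1 \<union> subterms s2)}"

definition TA :: "fm set \<Rightarrow> trm set" where
  "TA A = {t \<in> T A. sort_of t = Some Arr}"

definition W :: "fm set \<Rightarrow> fm set" where
  "W A = {Eq (Rd (Wr a i u) i) u | a i u. Wr a i u \<in> T A}"

definition is_const :: "trm \<Rightarrow> bool" where
  "is_const t \<longleftrightarrow> (\<exists>n s. t = Cst n s) \<or> (\<exists>X. t = K X)"

definition flat_term :: "trm \<Rightarrow> bool" where
  "flat_term t \<longleftrightarrow> is_const t
     \<or> (\<exists>a i. t = Rd a i \<and> is_const a \<and> is_const i)
     \<or> (\<exists>a i u. t = Wr a i u \<and> is_const a \<and> is_const i \<and> is_const u)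
     \<or> (\<exists>v. t = CA v \<and> is_const v)"

definition input_ok :: "fm set \<Rightarrow> bool" where
  "input_ok A \<longleftrightarrow> (\<forall>p\<in>A. wf_fm p \<and> qfree p) \<and>
     (\<forall>(s, t)\<in>atoms A. ground s \<and> ground t \<and> flat_term s \<and> flat_term t)"

fun conjs :: "fm list \<Rightarrow> fm" where
  "conjs [] = Tru"
| "conjs [p] = p"
| "conjs (p # ps) = Conj p (conjs ps)"

definition exdist :: "trm list \<Rightarrow> fm" where
  "exdist ks = Exi ''i'' Idx (conjs (map (\<lambda>k. Neg (Eq (Var ''i'' Idx) k)) ks))"

text \<open>Interpretations in the empty theory (all symbols, and the array sort, uninterpreted):
  a nonempty carrier per sort (as a subset of the value type 'v) and interpretations of
  all function symbols.\<close>
record 'v interp =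
  idom :: "srt \<Rightarrow> 'v set"
  isym :: "string \<Rightarrow> srt \<Rightarrow> 'v"
  ird :: "'v \<Rightarrow> 'v \<Rightarrow> 'v"
  iwr :: "'v \<Rightarrow> 'v \<Rightarrow> 'v \<Rightarrow> 'v"
  ica :: "'v \<Rightarrow> 'v"
  ik :: "trm fset \<Rightarrow> 'v"

definition wf_interp :: "'v interp \<Rightarrow> bool" where
  "wf_interp I \<longleftrightarrow> (\<forall>s. idom I s \<noteq> {}) \<and> (\<forall>n s. isym I n s \<in> idom I s)
     \<and> (\<forall>X. ik I X \<in> idom I Idx)
     \<and> (\<forall>a\<in>idom I Arr. \<forall>i\<in>idom I Idx. ird I a i \<in> idom I Elem)
     \<and> (\<forall>a\<in>idom I Arr. \<forall>i\<in>idom I Idx. \<forall>u\<in>idom I Elem. iwr I a i u \<in> idom I Arr)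
     \<and> (\<forall>v\<in>idom I Elem. ica I v \<in> idom I Arr)"

definition wf_assign :: "'v interp \<Rightarrow> (string \<Rightarrow> srt \<Rightarrow> 'v) \<Rightarrow> bool" where
  "wf_assign I \<rho> \<longleftrightarrow> (\<forall>x s. \<rho> x s \<in> idom I s)"

fun eval :: "'v interp \<Rightarrow> (string \<Rightarrow> srt \<Rightarrow> 'v) \<Rightarrow> trm \<Rightarrow> 'v" where
  "eval I \<rho> (Cst n s) = isym I n s"
| "eval I \<rho> (Var x s) = \<rho> x s"
| "eval I \<rho> (Rd a i) = ird I (eval I \<rho> a) (eval I \<rho> i)"
| "eval I \<rho> (Wr a i u) = iwr I (eval I \<rho> a) (eval I \<rho> i) (eval I \<rho> u)"
| "eval I \<rho> (CA v) = ica I (eval I \<rho> v)"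
| "eval I \<rho> (K X) = ik I X"

fun sat :: "'v interp \<Rightarrow> (string \<Rightarrow> srt \<Rightarrow> 'v) \<Rightarrow> fm \<Rightarrow> bool" where
  "sat I \<rho> Tru = True"
| "sat I \<rho> Fls = False"
| "sat I \<rho> (Eq s t) = (eval I \<rho> s = eval I \<rho> t)"
| "sat I \<rho> (Neg p) = (\<not> sat I \<rho> p)"
| "sat I \<rho> (Conj p q) = (sat I \<rho> p \<and> sat I \<rho> q)"
| "sat I \<rho> (Disj p q) = (sat I \<rho> p \<or> sat I \<rho> q)"
| "sat I \<rho> (Imp p q) = (sat I \<rho> p \<longrightarrow> sat I \<rho> q)"
| "sat I \<rho> (Exi x s p) = (\<exists>d\<in>idom I s. sat I (\<rho>(x := (\<rho> x)(s := d))) p)"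
| "sat I \<rho> (All x s p) = (\<forall>d\<in>idom I s. sat I (\<rho>(x := (\<rho> x)(s := d))) p)"

definition models :: "'v interp \<Rightarrow> fm \<Rightarrow> bool" where
  "models I p \<longleftrightarrow> (\<forall>\<rho>. wf_assign I \<rho> \<longrightarrow> sat I \<rho> p)"

definition arr_model :: "'v interp \<Rightarrow> bool" where
  "arr_model I \<longleftrightarrow> wf_interp I
   \<and> (\<forall>a\<in>idom I Arr. \<forall>i\<in>idom I Idx. \<forall>j\<in>idom I Idx. \<forall>u\<in>idom I Elem.
        i = j \<longrightarrow> ird I (iwr I a i u) j = u)
   \<and> (\<forall>a\<in>idom I Arr. \<forall>i\<in>idom I Idx. \<forall>j\<in>idom I Idx. \<forall>u\<in>idom I Elem.
        i \<noteq> j \<longrightarrow> ird I (iwr I a i u) j = ird I a j)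
   \<and> (\<forall>a\<in>idom I Arr. \<forall>b\<in>idom I Arr. a = b \<longleftrightarrow> (\<forall>i\<in>idom I Idx. ird I a i = ird I b i))
   \<and> (\<forall>i\<in>idom I Idx. \<forall>v\<in>idom I Elem. ird I (ica I v) i = v)"

text \<open>Validity in the theory of extensional constant arrays, over models whose carriers
  live in the type 'w (the main theorem is stated for an arbitrary type 'w).\<close>
definition tvalid :: "'w itself \<Rightarrow> fm \<Rightarrow> bool" where
  "tvalid _ p \<longleftrightarrow> (\<forall>(I::'w interp) \<rho>. arr_model I \<and> wf_assign I \<rho> \<longrightarrow> sat I \<rho> p)"

type_synonym pimap = "trm \<times> trm \<Rightarrow> (fm \<times> trm) option"

text \<open>Cfg A I pi; I = None is I_0 (none); pi(a,t) = None is the undefined value ().\<close>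
datatype 'v config = Unsat | Cfg "fm set" "'v interp option" pimap

definition pi0 :: pimap where "pi0 = (\<lambda>_. None)"

definition init :: "fm set \<Rightarrow> 'v config" where "init A = Cfg A None pi0"

text \<open>Reasons R(a,t) (as a relation; R(a,t) = r iff reason pi a t r).\<close>
inductive reason :: "pimap \<Rightarrow> trm \<Rightarrow> trm \<Rightarrow> fm \<Rightarrow> bool" for \<pi> where
  base: "\<pi> (a, t) \<noteq> None \<Longrightarrow> (t = a \<or> (\<exists>i. t = Rd a i)) \<Longrightarrow> reason \<pi> a t Tru"
| step: "\<pi> (a, t) = Some (r, c) \<Longrightarrow> \<not> (t = a \<or> (\<exists>i. t = Rd a i)) \<Longrightarrow> reason \<pi> c t r'
         \<Longrightarrow> reason \<pi> a t (Conj r' r)"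

text \<open>Updated indices I(a,<v>) (as a relation; t is the constant-array term <v>).\<close>
inductive upd :: "pimap \<Rightarrow> trm \<Rightarrow> trm \<Rightarrow> trm set \<Rightarrow> bool" for \<pi> where
  self: "\<pi> (a, t) \<noteq> None \<Longrightarrow> a = t \<Longrightarrow> upd \<pi> a t {}"
| wr: "\<pi> (a, t) = Some (Tru, b) \<Longrightarrow> a \<noteq> t \<Longrightarrow> (b = Wr a j u \<or> a = Wr b j u) \<Longrightarrow> upd \<pi> b t S
       \<Longrightarrow> upd \<pi> a t (insert j S)"
| other: "\<pi> (a, t) = Some (r, c) \<Longrightarrow> a \<noteq> t
       \<Longrightarrow> \<not> (r = Tru \<and> (\<exists>j u. c = Wr a j u \<or> a = Wr c j u)) \<Longrightarrow> upd \<pi> c t S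
       \<Longrightarrow> upd \<pi> a t S"

inductive caext_step :: "'v config \<Rightarrow> 'v config \<Rightarrow> bool" where
  Interp: "wf_interp I' \<Longrightarrow> (\<forall>p\<in>A \<union> W A. models I' p)
     \<Longrightarrow> caext_step (Cfg A None \<pi>) (Cfg A (Some I') \<pi>)"
| Conf: "\<not> (\<exists>I'::'v interp. wf_interp I' \<and> (\<forall>p\<in>A \<union> W A. models I' p))
     \<Longrightarrow> caext_step (Cfg A Io \<pi>) Unsat"
| InitR: "Rd a i \<in> T A
     \<Longrightarrow> caext_step (Cfg A Io \<pi>) (Cfg A Io (\<pi>((a, Rd a i) := Some (Tru, a))))"
| InitW: "s = Wr a i u \<Longrightarrow> s \<in> T A
     \<Longrightarrow> caext_step (Cfg A Io \<pi>) (Cfg A Io (\<pi>((s, Rd s i) := Some (Tru, s))))"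
| RowD: "models I (Neg (Eq i j)) \<Longrightarrow> \<pi> (Wr a j u, Rd b i) \<noteq> None \<Longrightarrow> \<pi> (a, Rd b i) = None
     \<Longrightarrow> caext_step (Cfg A (Some I) \<pi>)
           (Cfg A (Some I) (\<pi>((a, Rd b i) := Some (Neg (Eq i j), Wr a j u))))"
| RowU: "models I (Neg (Eq i j)) \<Longrightarrow> Wr a j u \<in> T A \<Longrightarrow> \<pi> (a, Rd b i) \<noteq> None
     \<Longrightarrow> \<pi> (Wr a j u, Rd b i) = None
     \<Longrightarrow> caext_step (Cfg A (Some I) \<pi>)
           (Cfg A (Some I) (\<pi>((Wr a j u, Rd b i) := Some (Neg (Eq i j), a))))"
| EqR: "models I (Eq a c) \<Longrightarrow> a \<in> TA A \<Longrightarrow> c \<in> TA A \<Longrightarrow> (a, c) \<in> atoms A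
     \<Longrightarrow> \<pi> (a, Rd b i) \<noteq> None \<Longrightarrow> \<pi> (c, Rd b i) = None
     \<Longrightarrow> caext_step (Cfg A (Some I) \<pi>) (Cfg A (Some I) (\<pi>((c, Rd b i) := Some (Eq a c, a))))"
| EqL: "models I (Eq a c) \<Longrightarrow> a \<in> TA A \<Longrightarrow> c \<in> TA A \<Longrightarrow> (a, c) \<in> atoms A
     \<Longrightarrow> \<pi> (c, Rd b i) \<noteq> None \<Longrightarrow> \<pi> (a, Rd b i) = None
     \<Longrightarrow> caext_step (Cfg A (Some I) \<pi>) (Cfg A (Some I) (\<pi>((a, Rd b i) := Some (Eq a c, c))))"
| CongR: "models I (Eq i k) \<Longrightarrow> \<pi> (a, Rd b i) \<noteq> None \<Longrightarrow> \<pi> (a, Rd c k) \<noteq> None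
     \<Longrightarrow> models I (Neg (Eq (Rd b i) (Rd c k)))
     \<Longrightarrow> reason \<pi> a (Rd b i) r1 \<Longrightarrow> reason \<pi> a (Rd c k) r2
     \<Longrightarrow> caext_step (Cfg A (Some I) \<pi>)
           (Cfg (insert (Imp (Conj (Conj r1 r2) (Eq i k)) (Eq (Rd b i) (Rd c k))) A) None pi0)"
| DisEq: "models I (Neg (Eq a c)) \<Longrightarrow> a \<in> TA A \<Longrightarrow> c \<in> TA A \<Longrightarrow> (a, c) \<in> atoms A
     \<Longrightarrow> K {|a, c|} \<notin> T A
     \<Longrightarrow> caext_step (Cfg A (Some I) \<pi>)
           (Cfg (insert (Imp (Neg (Eq a c)) (Neg (Eq (Rd a (K {|a, c|})) (Rd c (K {|a, c|}))))) A)
                None pi0)"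
| Roc: "\<pi> (CA v, Rd b i) \<noteq> None \<Longrightarrow> models I (Neg (Eq (Rd b i) v))
     \<Longrightarrow> reason \<pi> (CA v) (Rd b i) r
     \<Longrightarrow> caext_step (Cfg A (Some I) \<pi>) (Cfg (insert (Imp r (Eq (Rd b i) v)) A) None pi0)"
| InitC: "CA v \<in> T A
     \<Longrightarrow> caext_step (Cfg A Io \<pi>) (Cfg A Io (\<pi>((CA v, CA v) := Some (Tru, CA v))))"
| CowD: "\<pi> (Wr a j u, CA v) \<noteq> None \<Longrightarrow> \<pi> (a, CA v) = None
     \<Longrightarrow> upd \<pi> (Wr a j u) (CA v) S \<Longrightarrow> set ks = insert j S \<Longrightarrow> models I (exdist ks)
     \<Longrightarrow> caext_step (Cfg A (Some I) \<pi>)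
           (Cfg A (Some I) (\<pi>((a, CA v) := Some (Tru, Wr a j u))))"
| CowU: "\<pi> (a, CA v) \<noteq> None \<Longrightarrow> \<pi> (Wr a j u, CA v) = None \<Longrightarrow> Wr a j u \<in> T A
     \<Longrightarrow> upd \<pi> a (CA v) S \<Longrightarrow> set ks = insert j S \<Longrightarrow> models I (exdist ks)
     \<Longrightarrow> caext_step (Cfg A (Some I) \<pi>)
           (Cfg A (Some I) (\<pi>((Wr a j u, CA v) := Some (Tru, a))))"
| CEqR: "models I (Eq a c) \<Longrightarrow> a \<in> TA A \<Longrightarrow> c \<in> TA A \<Longrightarrow> (a, c) \<in> atoms A
     \<Longrightarrow> \<pi> (a, CA v) \<noteq> None \<Longrightarrow> \<pi> (c, CA v) = None
     \<Longrightarrow> caext_step (Cfg A (Some I) \<pi>) (Cfg A (Some I) (\<pi>((c, CA v) := Some (Eq a c, a))))"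
| CEqL: "models I (Eq a c) \<Longrightarrow> a \<in> TA A \<Longrightarrow> c \<in> TA A \<Longrightarrow> (a, c) \<in> atoms A
     \<Longrightarrow> \<pi> (c, CA v) \<noteq> None \<Longrightarrow> \<pi> (a, CA v) = None
     \<Longrightarrow> caext_step (Cfg A (Some I) \<pi>) (Cfg A (Some I) (\<pi>((a, CA v) := Some (Eq a c, c))))"
| CongC: "\<pi> (a, CA v) \<noteq> None \<Longrightarrow> \<pi> (a, CA w) \<noteq> None \<Longrightarrow> models I (Neg (Eq v w))
     \<Longrightarrow> upd \<pi> a (CA v) S1 \<Longrightarrow> upd \<pi> a (CA w) S2 \<Longrightarrow> set ks = S1 \<union> S2
     \<Longrightarrow> models I (exdist ks)
     \<Longrightarrow> reason \<pi> a (CA v) r1 \<Longrightarrow> reason \<pi> a (CA w) r2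
     \<Longrightarrow> caext_step (Cfg A (Some I) \<pi>)
           (Cfg (insert (Imp (Conj (Conj r1 r2) (exdist ks)) (Eq v w)) A) None pi0)"

end

theory Submission
  imports Defs
begin

(*
  Every defined read entry pi(a, b[i]) = (r, c) with a \<noteq> b links to a defined entry
  pi(c, b[i]), and its label r forces a[i] = c[i] in every array model: either r is
  i \<noteq> j and one of a, c is a write at j into the other (row-ne), or r equates a and c.
  The reason R(a, b[i]) is the conjunction of the labels along the chain of links down to
  the root entry pi(b, b[i]), so by transitivity it implies a[i] = b[i].
  Three invariants of every derivation make this work: links only point to defined entries,
  every defined read entry has a reason (new links only point to entries that already have
  one), and all terms in pi and A are well-sorted, so that their values lie in the carriers
  over which the array axioms quantify. The conflict rules reset pi and add only well-sorted
  formulas to A.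
*)

definition sorted_fm :: "fm \<Rightarrow> bool" where
  "sorted_fm p \<longleftrightarrow> (\<forall>(s, t)\<in>atoms_fm p. sort_of s \<noteq> None \<and> sort_of t \<noteq> None)"

lemma sorted_fm_simps [simp]:
  "sorted_fm Tru" "sorted_fm Fls"
  "sorted_fm (Eq s t) \<longleftrightarrow> sort_of s \<noteq> None \<and> sort_of t \<noteq> None"
  "sorted_fm (Neg p) \<longleftrightarrow> sorted_fm p"
  "sorted_fm (Conj p q) \<longleftrightarrow> sorted_fm p \<and> sorted_fm q"
  "sorted_fm (Disj p q) \<longleftrightarrow> sorted_fm p \<and> sorted_fm q"
  "sorted_fm (Imp p q) \<longleftrightarrow> sorted_fm p \<and> sorted_fm q"
  "sorted_fm (Exi x st p) \<longleftrightarrow> sorted_fm p"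
  "sorted_fm (All x st p) \<longleftrightarrow> sorted_fm p"
  unfolding sorted_fm_def by (simp_all add: ball_Un)

lemma wf_fm_imp_sorted_fm: "wf_fm p \<Longrightarrow> sorted_fm p"
  by (induction p) (simp_all, metis)

lemma sorted_fm_conjs: "\<forall>p\<in>set ps. sorted_fm p \<Longrightarrow> sorted_fm (conjs ps)"
  by (induction ps rule: conjs.induct) auto

lemma sorted_fm_exdist: "\<forall>k\<in>set ks. sort_of k \<noteq> None \<Longrightarrow> sorted_fm (exdist ks)"
  by (simp add: exdist_def sorted_fm_conjs)

lemma sort_of_subterm: "t \<in> subterms s \<Longrightarrow> sort_of s \<noteq> None \<Longrightarrow> sort_of t \<noteq> None"
  by (induction s) (auto split: if_splits)

lemma sort_of_mem_T:
  assumes "\<forall>p\<in>A. sorted_fm p" and "t \<in> T A"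
  shows "sort_of t \<noteq> None"
  using assms unfolding T_def atoms_def sorted_fm_def by (fastforce dest: sort_of_subterm)

definition sorted_entries :: "pimap \<Rightarrow> bool" where
  "sorted_entries \<pi> \<longleftrightarrow> (\<forall>a t r c. \<pi> (a, t) = Some (r, c) \<longrightarrow>
     sort_of a = Some Arr \<and> sort_of t \<noteq> None \<and> sort_of c = Some Arr \<and> sorted_fm r)"

(* The labels that RowD, RowU, EqR and EqL put on an entry (a, b[i]) pointing to c. *)
definition read_link :: "fm \<Rightarrow> trm \<Rightarrow> trm \<Rightarrow> trm \<Rightarrow> bool" where
  "read_link r a c i \<longleftrightarrow>
     (\<exists>j u. r = Neg (Eq i j) \<and> (c = Wr a j u \<or> a = Wr c j u)) \<or> r = Eq a c \<or> r = Eq c a"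

definition read_links_closed :: "pimap \<Rightarrow> bool" where
  "read_links_closed \<pi> \<longleftrightarrow> (\<forall>a b i r c. \<pi> (a, Rd b i) = Some (r, c) \<longrightarrow>
     a = b \<or> (\<pi> (c, Rd b i) \<noteq> None \<and> read_link r a c i))"

definition read_reasons_exist :: "pimap \<Rightarrow> bool" where
  "read_reasons_exist \<pi> \<longleftrightarrow> (\<forall>a b i. \<pi> (a, Rd b i) \<noteq> None \<longrightarrow> (\<exists>r. reason \<pi> a (Rd b i) r))"

lemma sorted_entriesD:
  "sorted_entries \<pi> \<Longrightarrow> \<pi> (a, t) = Some (r, c) \<Longrightarrow>
     sort_of a = Some Arr \<and> sort_of t \<noteq> None \<and> sort_of c = Some Arr \<and> sorted_fm r"
  unfolding sorted_entries_def by blast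

lemma sorted_fm_reason: "reason \<pi> a t r \<Longrightarrow> sorted_entries \<pi> \<Longrightarrow> sorted_fm r"
  by (induction rule: reason.induct) (auto dest: sorted_entriesD)

lemma sort_of_upd_index: "upd \<pi> a t S \<Longrightarrow> sorted_entries \<pi> \<Longrightarrow> j \<in> S \<Longrightarrow> sort_of j = Some Idx"
proof (induction rule: upd.induct)
  case (wr a t b j u S)
  then have "sort_of a = Some Arr" "sort_of b = Some Arr" by (auto dest: sorted_entriesD)
  with wr show ?case by (auto split: if_splits)
qed auto

lemma eval_in_idom:
  "wf_interp I \<Longrightarrow> wf_assign I \<rho> \<Longrightarrow> sort_of t = Some s \<Longrightarrow> eval I \<rho> t \<in> idom I s"
  by (induction t arbitrary: s) (auto simp: wf_interp_def wf_assign_def split: if_splits)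

lemma read_link_eq:
  assumes "arr_model I" and "wf_assign I \<rho>"
    and "sort_of a = Some Arr" and "sort_of c = Some Arr" and "sort_of i = Some Idx"
    and "read_link r a c i" and "sat I \<rho> r"
  shows "eval I \<rho> (Rd a i) = eval I \<rho> (Rd c i)"
proof -
  have wf: "wf_interp I"
    using \<open>arr_model I\<close> unfolding arr_model_def by blast
  have row_ne: "ird I (iwr I d k u) l = ird I d l"
    if "d \<in> idom I Arr" "k \<in> idom I Idx" "l \<in> idom I Idx" "u \<in> idom I Elem" "k \<noteq> l" for d k l u
    using \<open>arr_model I\<close> that unfolding arr_model_def by blast
  have row_ne_term: "eval I \<rho> (Rd (Wr d j u) i) = eval I \<rho> (Rd d i)"
    if "sort_of (Wr d j u) = Some Arr" "sat I \<rho> (Neg (Eq i j))" for d j u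
    using that \<open>sort_of i = Some Idx\<close>
    by (auto intro!: row_ne eval_in_idom[OF wf \<open>wf_assign I \<rho>\<close>] split: if_splits)
  from \<open>read_link r a c i\<close> show ?thesis
    unfolding read_link_def
  proof (elim disjE exE conjE)
    fix j u assume "r = Neg (Eq i j)" and "c = Wr a j u"
    then show ?thesis using row_ne_term \<open>sort_of c = Some Arr\<close> \<open>sat I \<rho> r\<close> by simp
  next
    fix j u assume "r = Neg (Eq i j)" and "a = Wr c j u"
    then show ?thesis using row_ne_term \<open>sort_of a = Some Arr\<close> \<open>sat I \<rho> r\<close> by simp
  qed (use \<open>sat I \<rho> r\<close> in auto)
qed

lemma reason_read_eq:
  assumes "reason \<pi> a (Rd b i) r"
    and "sorted_entries \<pi>" and "read_links_closed \<pi>"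
    and "arr_model I" and "wf_assign I \<rho>" and "sat I \<rho> r"
  shows "eval I \<rho> (Rd a i) = eval I \<rho> (Rd b i)"
  using assms(1,6)
proof (induction a "Rd b i" r rule: reason.induct)
  case (base a)
  then have "sort_of a = Some Arr"
    using \<open>sorted_entries \<pi>\<close> by (auto dest: sorted_entriesD)
  with base have "a = b" by (auto split: if_splits)
  then show ?case by simp
next
  case (step a r c r')
  have sorts: "sort_of a = Some Arr" "sort_of c = Some Arr" "sort_of i = Some Idx"
    using sorted_entriesD[OF \<open>sorted_entries \<pi>\<close> step.hyps(1)] by (auto split: if_splits)
  have "read_link r a c i"
    using \<open>read_links_closed \<pi>\<close> step.hyps(1,2) unfolding read_links_closed_def by blast
  then have "eval I \<rho> (Rd a i) = eval I \<rho> (Rd c i)"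
    using read_link_eq[OF assms(4,5) sorts] step.prems by simp
  also have "\<dots> = eval I \<rho> (Rd b i)"
    using step by simp
  finally show ?case .
qed

lemma reason_read_valid:
  assumes "sorted_entries \<pi>" and "read_links_closed \<pi>" and "reason \<pi> a (Rd b i) r"
  shows "tvalid TYPE('w) (Imp r (Eq (Rd a i) (Rd b i)))"
  using reason_read_eq[OF assms(3,1,2)] unfolding tvalid_def by auto

(* The Init rules may overwrite a defined entry, but only at a root key (a, a) or (a, a[i]),
   whose stored value reason never inspects. *)
lemma reason_fun_upd:
  assumes "reason \<pi> a t r" and "\<pi> (x, s) = None \<or> s = x \<or> (\<exists>i. s = Rd x i)"
  shows "reason (\<pi>((x, s) := Some e)) a t r"
  using assms
proof (induction rule: reason.induct)
  case (base a t)
  then show ?case by (intro reason.base) auto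
next
  case (step a t r c r')
  then show ?case by (intro reason.step[of _ _ _ r c]) auto
qed

lemma sorted_entries_fun_upd:
  assumes "sorted_entries \<pi>"
    and "sort_of x = Some Arr" and "sort_of t \<noteq> None" and "sort_of c = Some Arr" and "sorted_fm r"
  shows "sorted_entries (\<pi>((x, t) := Some (r, c)))"
  using assms unfolding sorted_entries_def by auto

lemma read_links_closed_fun_upd:
  assumes closed: "read_links_closed \<pi>"
    and link: "\<forall>b i. t = Rd b i \<longrightarrow> x = b \<or> (\<pi> (c, Rd b i) \<noteq> None \<and> read_link r x c i)"
  shows "read_links_closed (\<pi>((x, t) := Some (r, c)))"
  unfolding read_links_closed_def
proof (intro allI impI)
  let ?\<pi>' = "\<pi>((x, t) := Some (r, c))"
  fix a b i r' c'
  assume "?\<pi>' (a, Rd b i) = Some (r', c')"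
  then consider "a = x" "t = Rd b i" "r' = r" "c' = c" | "\<pi> (a, Rd b i) = Some (r', c')"
    by (cases "(a, Rd b i) = (x, t)") auto
  then show "a = b \<or> (?\<pi>' (c', Rd b i) \<noteq> None \<and> read_link r' a c' i)"
  proof cases
    case 1
    with link have "x = b \<or> (\<pi> (c, Rd b i) \<noteq> None \<and> read_link r x c i)"
      by blast
    with 1 show ?thesis by auto
  next
    case 2
    with closed have "a = b \<or> (\<pi> (c', Rd b i) \<noteq> None \<and> read_link r' a c' i)"
      unfolding read_links_closed_def by blast
    then show ?thesis by auto
  qed
qed

lemma read_reasons_exist_fun_upd:
  assumes "read_reasons_exist \<pi>" and "sort_of x = Some Arr"
    and link: "\<forall>b i. t = Rd b i \<longrightarrow> x = b \<or> \<pi> (c, Rd b i) \<noteq> None"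
    and fresh: "\<pi> (x, t) = None \<or> t = x \<or> (\<exists>i. t = Rd x i)"
  shows "read_reasons_exist (\<pi>((x, t) := Some (r, c)))"
  unfolding read_reasons_exist_def
proof (intro allI impI)
  let ?\<pi>' = "\<pi>((x, t) := Some (r, c))"
  fix a b i
  assume "?\<pi>' (a, Rd b i) \<noteq> None"
  show "\<exists>r'. reason ?\<pi>' a (Rd b i) r'"
  proof (cases "(a, Rd b i) = (x, t)")
    case new: True
    show ?thesis
    proof (cases "a = b")
      case True
      with new show ?thesis by (intro exI[of _ Tru] reason.base) auto
    next
      case False
      with new link obtain r' where "reason \<pi> c (Rd b i) r'"
        using \<open>read_reasons_exist \<pi>\<close> unfolding read_reasons_exist_def by blast
      then have "reason ?\<pi>' c (Rd b i) r'"
        using fresh by (rule reason_fun_upd)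
      with new False \<open>sort_of x = Some Arr\<close> show ?thesis
        by (intro exI[of _ "Conj r' r"] reason.step[of _ _ _ r c]) (auto split: if_splits)
    qed
  next
    case False
    with \<open>?\<pi>' (a, Rd b i) \<noteq> None\<close> have "\<pi> (a, Rd b i) \<noteq> None"
      by (simp del: not_None_eq split: if_splits)
    then obtain r' where "reason \<pi> a (Rd b i) r'"
      using \<open>read_reasons_exist \<pi>\<close> unfolding read_reasons_exist_def by blast
    then show ?thesis
      using fresh by (blast intro: reason_fun_upd)
  qed
qed

fun caext_inv :: "'v config \<Rightarrow> bool" where
  "caext_inv Unsat \<longleftrightarrow> True"
| "caext_inv (Cfg A Io \<pi>) \<longleftrightarrow> (\<forall>p\<in>A. sorted_fm p)
     \<and> sorted_entries \<pi> \<and> read_links_closed \<pi> \<and> read_reasons_exist \<pi>"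

lemma pi0_invariants [simp]: "sorted_entries pi0" "read_links_closed pi0" "read_reasons_exist pi0"
  unfolding pi0_def sorted_entries_def read_links_closed_def read_reasons_exist_def by auto

lemma caext_inv_init: "input_ok A \<Longrightarrow> caext_inv (init A)"
  unfolding input_ok_def init_def by (auto intro: wf_fm_imp_sorted_fm)

lemma caext_inv_fun_upd:
  assumes "caext_inv (Cfg A Io \<pi>)"
    and "sort_of x = Some Arr" and "sort_of t \<noteq> None" and "sort_of c = Some Arr" and "sorted_fm r"
    and "\<forall>b i. t = Rd b i \<longrightarrow> x = b \<or> (\<pi> (c, Rd b i) \<noteq> None \<and> read_link r x c i)"
    and "\<pi> (x, t) = None \<or> t = x \<or> (\<exists>i. t = Rd x i)"
  shows "caext_inv (Cfg A Io (\<pi>((x, t) := Some (r, c))))"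
  using assms
  by (auto intro!: sorted_entries_fun_upd read_links_closed_fun_upd read_reasons_exist_fun_upd)

lemma caext_inv_term_sort: "caext_inv (Cfg A Io \<pi>) \<Longrightarrow> t \<in> T A \<Longrightarrow> sort_of t \<noteq> None"
  by (metis caext_inv.simps(2) sort_of_mem_T)

lemma caext_inv_root_entry:
  assumes "caext_inv (Cfg A Io \<pi>)" and "sort_of x = Some Arr" and "sort_of t \<noteq> None"
    and "t = x \<or> (\<exists>i. t = Rd x i)"
  shows "caext_inv (Cfg A Io (\<pi>((x, t) := Some (Tru, x))))"
  using assms by (intro caext_inv_fun_upd) (auto split: if_splits)

lemma caext_inv_link_entry:
  assumes "caext_inv (Cfg A Io \<pi>)" and "\<pi> (c, t) \<noteq> None" and "\<pi> (x, t) = None"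
    and "sort_of x = Some Arr" and "sorted_fm r" and "\<forall>b i. t = Rd b i \<longrightarrow> read_link r x c i"
  shows "caext_inv (Cfg A Io (\<pi>((x, t) := Some (r, c))))"
proof -
  from assms(1,2) obtain r' c' where "\<pi> (c, t) = Some (r', c')"
    by auto
  with assms(1) have "sort_of c = Some Arr" "sort_of t \<noteq> None"
    by (auto dest: sorted_entriesD)
  with assms show ?thesis
    by (intro caext_inv_fun_upd) auto
qed

lemma caext_step_inv: "caext_step C C' \<Longrightarrow> caext_inv C \<Longrightarrow> caext_inv C'"
proof (induction rule: caext_step.induct)
  case (InitR a i A Io \<pi>)
  then have "sort_of (Rd a i) \<noteq> None" by (metis caext_inv_term_sort)
  with InitR show ?case by (intro caext_inv_root_entry) (auto split: if_splits)
next
  case (InitW s a i u A Io \<pi>)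
  then have "sort_of s \<noteq> None" by (metis caext_inv_term_sort)
  with InitW show ?case by (intro caext_inv_root_entry) (auto split: if_splits)
next
  case (InitC v A Io \<pi>)
  then have "sort_of (CA v) \<noteq> None" by (metis caext_inv_term_sort)
  with InitC show ?case by (intro caext_inv_root_entry) (auto split: if_splits)
next
  case (RowD I i j \<pi> a u b A)
  then show ?case
    by (intro caext_inv_link_entry) (auto simp: read_link_def dest: sorted_entriesD split: if_splits)
next
  case (RowU I i j a u A \<pi> b)
  then have "sort_of (Wr a j u) \<noteq> None" by (metis caext_inv_term_sort)
  with RowU show ?case
    by (intro caext_inv_link_entry) (auto simp: read_link_def dest: sorted_entriesD split: if_splits)
next
  case (EqR I a c A \<pi> b i)
  then show ?case by (intro caext_inv_link_entry) (auto simp: read_link_def TA_def)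
next
  case (EqL I a c A \<pi> b i)
  then show ?case by (intro caext_inv_link_entry) (auto simp: read_link_def TA_def)
next
  case (CowD \<pi> a j u v S ks I A)
  then show ?case
    by (intro caext_inv_link_entry) (auto dest: sorted_entriesD split: if_splits)
next
  case (CowU \<pi> a v j u A S ks I)
  then have "sort_of (Wr a j u) \<noteq> None" by (metis caext_inv_term_sort)
  with CowU show ?case by (intro caext_inv_link_entry) (auto split: if_splits)
next
  case (CEqR I a c A \<pi> v)
  then show ?case by (intro caext_inv_link_entry) (auto simp: TA_def)
next
  case (CEqL I a c A \<pi> v)
  then show ?case by (intro caext_inv_link_entry) (auto simp: TA_def)
next
  case (CongR I i k \<pi> a b c r1 r2 A)
  then show ?case
    by (auto intro: sorted_fm_reason dest: sorted_entriesD split: if_splits)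
next
  case (DisEq I a c A \<pi>)
  then show ?case by (auto simp: TA_def)
next
  case (Roc \<pi> v b i I r A)
  then show ?case
    by (auto intro: sorted_fm_reason dest: sorted_entriesD split: if_splits)
next
  case (CongC \<pi> a v w I S1 S2 ks r1 r2 A)
  then have "sorted_fm (exdist ks)"
    by (auto intro!: sorted_fm_exdist dest: sort_of_upd_index)
  with CongC show ?case
    by (auto intro: sorted_fm_reason dest: sorted_entriesD split: if_splits)
qed auto

lemma caext_inv_reachable:
  assumes "input_ok A" and "caext_step\<^sup>*\<^sup>* (init A) C"
  shows "caext_inv C"
  using assms(2) caext_inv_init[OF assms(1)]
  by (induction rule: rtranclp_induct) (auto intro: caext_step_inv)

theorem mainTheorem4:
  fixes A0 :: "fm set" and C :: "'v config"
  assumes "input_ok A0"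
    and "caext_step\<^sup>*\<^sup>* (init A0) C"
    and "C \<noteq> Unsat"
  shows "\<forall>A Io \<pi>. C = Cfg A Io \<pi> \<longrightarrow>
     (\<forall>a b i. sort_of a = Some Arr \<and> sort_of b = Some Arr \<and> sort_of i = Some Idx
        \<and> \<pi> (a, Rd b i) \<noteq> None \<longrightarrow>
          (\<exists>r. reason \<pi> a (Rd b i) r) \<and>
          (\<forall>r. reason \<pi> a (Rd b i) r \<longrightarrow>
             tvalid TYPE('w) (Imp r (Eq (Rd a i) (Rd b i)))))"
proof (intro allI impI conjI)
  fix A Io \<pi> a b i
  assume "C = Cfg A Io \<pi>"
  with caext_inv_reachable[OF assms(1,2)]
  have inv: "sorted_entries \<pi>" "read_links_closed \<pi>" "read_reasons_exist \<pi>"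
    by simp_all
  assume "sort_of a = Some Arr \<and> sort_of b = Some Arr \<and> sort_of i = Some Idx
    \<and> \<pi> (a, Rd b i) \<noteq> None"
  with inv(3) show "\<exists>r. reason \<pi> a (Rd b i) r"
    unfolding read_reasons_exist_def by blast
  fix r
  assume "reason \<pi> a (Rd b i) r"
  with inv(1,2) show "tvalid TYPE('w) (Imp r (Eq (Rd a i) (Rd b i)))"
    by (rule reason_read_valid)
qed

end
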